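(* Let $\Omega$ be a domain, let $\mathcal{X}$ be a Banach space continuously embedded in $L^2(\Omega)$, and let $J:\mathcal{X}\to[0,\infty]$ be a convex, absolutely one-homogeneous functional ($J(cu)=|c|J(u)$) with $J(u)>0$ for all $u\in\mathcal{X}\setminus\{0\}$, such that the gradient flow, variational problem and inverse scale space flow below are well posed. Let $f\in\mathcal{X}$ be a (nonlinear) eigenfunction of $J$ with eigenvalue $\lambda>0$, i.e. $\lambda f\in\partial J(f)$. Then, for each $*\in\{\mathrm{GF},\mathrm{VM},\mathrm{IS}\}$, the wavelength and frequency spectral representations (defined in the context) satisfy, in the sense of distributions, $$\phi_*(t)=f\,\delta_{1/\lambda}(t),\qquad \psi_*(s)=f\,\delta_{\lambda}(s),$$ where $\delta_a$ denotes the Dirac delta at $a$.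
   Context: $\partial J(u)$ denotes the subdifferential of $J$ at $u$ (with respect to the $L^2(\Omega)$ inner product). Time derivatives below are taken in the distributional sense. Gradient flow (GF): $u_{GF}(t)$ solves $\partial_t u=-p_{GF}$, $p_{GF}(t)\in\partial J(u(t))$ for $t>0$, $u(0)=f$. Define $\phi_{GF}(t)=t\,\partial_{tt}u_{GF}(t)=-t\,\partial_t p_{GF}(t)$ and $\psi_{GF}(s)=\frac{1}{s^3}\partial_{tt}u_{GF}(\tfrac1s)$. Variational method (VM): $u_{VM}(t)$ is the minimizer over $u\in\mathcal{X}$ of $\frac12\|u-f\|_2^2+tJ(u)$, so $u_{VM}(t)=f-tp_{VM}(t)$ with $p_{VM}(t)\in\partial J(u_{VM}(t))$. Define $\phi_{VM}(t)=t\,\partial_{tt}u_{VM}(t)=-\partial_t(t^2\partial_t p_{VM}(t))$; with $v_{VM}(s)=u_{VM}(1/s)$ (the minimizer of $\frac s2\|v-f\|_2^2+J(v)$), define $\psi_{VM}(s)=\frac{1}{s^3}\partial_{tt}u_{VM}(\tfrac1s)=\frac1s\partial_s(s^2\partial_s v_{VM}(s))$. Inverse scale space (IS): $v_{IS}(s)$ solves $\partial_s q_{IS}=f-v$, $q_{IS}(s)\in\partial J(v(s))$ for $s>0$, $v(0)=0$. Define $\psi_{IS}(s)=\partial_s v_{IS}(s)$; with $u_{IS}(t)=v_{IS}(1/t)$ define $\phi_{IS}(t)=-\partial_t u_{IS}(t)$. In all cases $\phi_*$ and $\psi_*$ are related by $\psi_*(s)=\phi_*(1/s)/s^2$, equivalently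 $\int_0^\infty\phi_*(t)w(t)\,dt=\int_0^\infty\psi_*(s)w(1/s)\,ds$ for test functions $w$. *)

theory Defs
  imports "HOL-Analysis.Analysis"
begin

text \<open>The ambient Hilbert space H (playing the role of L2 of Omega) is an abstract real
  inner product space of type 'a, complete and separable.\<close>

definition banach_embedded :: "'a::{real_inner,banach,second_countable_topology} set \<Rightarrow> ('a \<Rightarrow> real) \<Rightarrow> bool" where
  "banach_embedded X nX \<longleftrightarrow>
     subspace X \<and>
     (\<forall>x\<in>X. nX x \<ge> 0 \<and> (nX x = 0 \<longleftrightarrow> x = 0)) \<and>
     (\<forall>x\<in>X. \<forall>y\<in>X. nX (x + y) \<le> nX x + nX y) \<and>
     (\<forall>x\<in>X. \<forall>c. nX (c *\<^sub>R x) = \<bar>c\<bar> * nX x) \<and>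
     (\<forall>s. (\<forall>n. s n \<in> X) \<longrightarrow> (\<forall>e>0. \<exists>N. \<forall>m\<ge>N. \<forall>n\<ge>N. nX (s m - s n) < e) \<longrightarrow>
          (\<exists>x\<in>X. (\<lambda>n. nX (s n - x)) \<longlonglongrightarrow> 0)) \<and>
     (\<exists>C. \<forall>x\<in>X. norm x \<le> C * nX x)"

definition subdiff :: "'a::real_inner set \<Rightarrow> ('a \<Rightarrow> ereal) \<Rightarrow> 'a \<Rightarrow> 'a set" where
  "subdiff X J u = {p. u \<in> X \<and> J u \<noteq> \<infinity> \<and> (\<forall>v\<in>X. J u + ereal (p \<bullet> (v - u)) \<le> J v)}"

definition test_function :: "(real \<Rightarrow> real) \<Rightarrow> bool" where
  "test_function w \<longleftrightarrow>
     (\<forall>n x. ((deriv ^^ n) w) differentiable (at x)) \<and>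
     (\<exists>a b. 0 < a \<and> a \<le> b \<and> (\<forall>t. t \<notin> {a..b} \<longrightarrow> w t = 0))"

definition dist_deriv :: "(real \<Rightarrow> 'a::{banach,second_countable_topology}) \<Rightarrow> (real \<Rightarrow> 'a) \<Rightarrow> bool" where
  "dist_deriv u d \<longleftrightarrow>
     (\<forall>a b. 0 < a \<longrightarrow> set_integrable lborel {a..b} u \<and> set_integrable lborel {a..b} d) \<and>
     (\<forall>w. test_function w \<longrightarrow>
        (LINT t:{0<..}|lborel. deriv w t *\<^sub>R u t) = - (LINT t:{0<..}|lborel. w t *\<^sub>R d t))"

definition GF_sol :: "'a::{real_inner,banach,second_countable_topology} set \<Rightarrow> ('a \<Rightarrow> ereal) \<Rightarrow> 'a \<Rightarrow>
    (real \<Rightarrow> 'a) \<Rightarrow> (real \<Rightarrow> 'a) \<Rightarrow> bool" where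
  "GF_sol X J g u p \<longleftrightarrow>
     continuous_on {0..} u \<and> u 0 = g \<and>
     (\<forall>t>0. p t \<in> subdiff X J (u t)) \<and>
     dist_deriv u (\<lambda>t. - p t)"

definition VM_sol :: "'a::real_inner set \<Rightarrow> ('a \<Rightarrow> ereal) \<Rightarrow> 'a \<Rightarrow> (real \<Rightarrow> 'a) \<Rightarrow> bool" where
  "VM_sol X J g u \<longleftrightarrow>
     (\<forall>t>0. u t \<in> X \<and>
        (\<forall>v\<in>X. ereal (norm (u t - g)^2 / 2) + ereal t * J (u t)
               \<le> ereal (norm (v - g)^2 / 2) + ereal t * J v))"

definition IS_sol :: "'a::{real_inner,banach,second_countable_topology} set \<Rightarrow> ('a \<Rightarrow> ereal) \<Rightarrow> 'a \<Rightarrow>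
    (real \<Rightarrow> 'a) \<Rightarrow> (real \<Rightarrow> 'a) \<Rightarrow> bool" where
  "IS_sol X J g v q \<longleftrightarrow>
     v 0 = 0 \<and> continuous_on {0..} q \<and> q 0 = 0 \<and>
     (\<forall>s>0. q s \<in> subdiff X J (v s)) \<and>
     dist_deriv q (\<lambda>s. g - v s)"

text \<open>phi(t) = t \<partial>_tt u(t)  (used for GF and VM):  <phi,w> = \<integral> u(t) (t w(t))'' dt.\<close>
definition phi_tt :: "(real \<Rightarrow> 'a::{banach,second_countable_topology}) \<Rightarrow> (real \<Rightarrow> real) \<Rightarrow> 'a" where
  "phi_tt u w = (LINT t:{0<..}|lborel. deriv (deriv (\<lambda>r. r * w r)) t *\<^sub>R u t)"

text \<open>psi_GF(s) = s^-3 (\<partial>_tt u)(1/s):  <psi,w> = <\<partial>_tt u, t \<mapsto> t w(1/t)> = \<integral> u(t) (t w(1/t))'' dt.\<close>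
definition psi_GF :: "(real \<Rightarrow> 'a::{banach,second_countable_topology}) \<Rightarrow> (real \<Rightarrow> real) \<Rightarrow> 'a" where
  "psi_GF u w = (LINT t:{0<..}|lborel. deriv (deriv (\<lambda>r. r * w (1 / r))) t *\<^sub>R u t)"

text \<open>psi_VM(s) = (1/s) \<partial>_s (s^2 \<partial>_s v(s)) with v(s) = u(1/s):
  <psi,w> = \<integral> v(s) (s^2 (w(s)/s)')' ds.\<close>
definition psi_VM :: "(real \<Rightarrow> 'a::{banach,second_countable_topology}) \<Rightarrow> (real \<Rightarrow> real) \<Rightarrow> 'a" where
  "psi_VM u w = (LINT s:{0<..}|lborel. deriv (\<lambda>r. r^2 * deriv (\<lambda>x. w x / x) r) s *\<^sub>R u (1 / s))"

text \<open>psi_IS(s) = \<partial>_s v(s):  <psi,w> = - \<integral> v(s) w'(s) ds.\<close>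
definition psi_IS :: "(real \<Rightarrow> 'a::{banach,second_countable_topology}) \<Rightarrow> (real \<Rightarrow> real) \<Rightarrow> 'a" where
  "psi_IS v w = - (LINT s:{0<..}|lborel. deriv w s *\<^sub>R v s)"

text \<open>phi_IS(t) = - \<partial>_t u_IS(t) with u_IS(t) = v(1/t):  <phi,w> = \<integral> v(1/t) w'(t) dt.\<close>
definition phi_IS :: "(real \<Rightarrow> 'a::{banach,second_countable_topology}) \<Rightarrow> (real \<Rightarrow> real) \<Rightarrow> 'a" where
  "phi_IS v w = (LINT t:{0<..}|lborel. deriv w t *\<^sub>R v (1 / t))"

end

theory Submission
  imports Defs
begin

text \<open>For an eigenfunction f with lam f \<in> \<partial>J(f), one-homogeneity gives J(c f) = c lam |f|^2 and
  mu f \<in> \<partial>J(c f) whenever c \<ge> 0, 0 \<le> mu \<le> lam and (c = 0 or mu = lam). Hence all three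
  problems are solved by multiples of f: the gradient flow and the variational method by
  (1 - lam t)^+ f, the inverse scale space flow by the step H(s - lam) f. For GF and IS the assumed
  uniqueness identifies every solution with these; for VM the minimizer is unique by strict
  convexity of the fidelity term. Pairing the second derivative of the kink at 1/lam, resp. the
  derivative of the jump at lam, with a test function then yields the Dirac masses by integration
  by parts.\<close>

section \<open>Integrals and derivatives on the real line\<close>

lemma integral_scaleR_left_real_inner:
  fixes c :: "'a::{real_inner,banach,second_countable_topology}"
  shows "(\<integral>x. h x *\<^sub>R c \<partial>M) = integral\<^sup>L M h *\<^sub>R c"
proof (cases "c = 0 \<or> integrable M h")
  case True
  then show ?thesis by auto
next
  case False
  have "\<not> integrable M (\<lambda>x. h x *\<^sub>R c)"
  proof
    assume "integrable M (\<lambda>x. h x *\<^sub>R c)"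
    then have "integrable M (\<lambda>x. inner (h x *\<^sub>R c) c / inner c c)"
      by (intro integrable_divide_zero integrable_inner_left)
    moreover have "(\<lambda>x. inner (h x *\<^sub>R c) c / inner c c) = h"
      using False by auto
    ultimately show False
      using False by simp
  qed
  then show ?thesis
    using False by (simp add: not_integrable_integral_eq)
qed

lemma set_integral_scaleR_scaleR_const:
  fixes f :: "'a::{real_inner,banach,second_countable_topology}"
  shows "(LINT t:A|M. k t *\<^sub>R (c t *\<^sub>R f)) = (\<integral>t. (k t * c t) * indicator A t \<partial>M) *\<^sub>R f"
proof -
  have "(\<lambda>t. indicator A t *\<^sub>R (k t *\<^sub>R (c t *\<^sub>R f))) = (\<lambda>t. (k t * c t * indicator A t) *\<^sub>R f)"
    by (auto simp: indicator_def)
  then show ?thesis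
    unfolding set_lebesgue_integral_def by (simp only: integral_scaleR_left_real_inner)
qed

lemma set_integrable_bounded_scaleR_const:
  fixes f :: "'a::{banach,second_countable_topology}" and a b :: real
  assumes "c \<in> borel_measurable lborel" "\<And>x. \<bar>c x\<bar> \<le> K"
  shows "set_integrable lborel {a..b} (\<lambda>x. c x *\<^sub>R f)"
proof (rule set_integrable_bound[where f = "\<lambda>_. K *\<^sub>R f"])
  show "set_integrable lborel {a..b} (\<lambda>_. K *\<^sub>R f)"
    unfolding set_integrable_def by (rule borel_integrable_compact) auto
  show "set_borel_measurable lborel {a..b} (\<lambda>x. c x *\<^sub>R f)"
    unfolding set_borel_measurable_def using assms(1) by measurable
  have "K \<ge> 0"
    using assms(2)[of 0] by simp
  then show "AE x in lborel. x \<in> {a..b} \<longrightarrow> norm (c x *\<^sub>R f) \<le> norm (K *\<^sub>R f)"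
    using assms(2) by (auto intro!: mult_right_mono)
qed

lemma integrable_continuous_indicator_Icc:
  fixes g :: "real \<Rightarrow> real"
  assumes "\<And>x. isCont g x"
  shows "integrable lborel (\<lambda>x. g x * indicator {c..d} x)"
proof -
  have "integrable lborel (\<lambda>x. indicator {c..d} x *\<^sub>R g x)"
    by (rule borel_integrable_compact) (auto intro!: continuous_at_imp_continuous_on assms)
  then show ?thesis
    by (simp add: mult.commute)
qed

lemma has_real_derivative_locally_zero:
  fixes g :: "real \<Rightarrow> real"
  assumes "open S" "x \<in> S" "\<And>y. y \<in> S \<Longrightarrow> g y = 0"
  shows "(g has_real_derivative 0) (at x)"
  using has_field_derivative_transform_within_open[of "\<lambda>_. 0" 0 x S g] assms by auto

lemma isCont_transform_open:
  fixes f g :: "real \<Rightarrow> real"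
  assumes "isCont g x" "open S" "x \<in> S" "\<And>y. y \<in> S \<Longrightarrow> g y = f y"
  shows "isCont f x"
  using continuous_transform_within_openin[of x UNIV g S f] assms by auto

lemma deriv_deriv_eqI:
  fixes g :: "real \<Rightarrow> real"
  assumes "\<And>x. (g has_real_derivative g' x) (at x)" "\<And>x. (g' has_real_derivative g'' x) (at x)"
  shows "deriv (deriv g) = g''"
proof -
  have "deriv g = g'"
    using assms(1) DERIV_imp_deriv by blast
  then show ?thesis
    using assms(2) DERIV_imp_deriv by blast
qed

text \<open>On (0,\<infinity>) the kink (1 - lam t)^+ has second derivative lam \<delta>_(1/lam); the remaining
  terms come from the boundary at 0.\<close>

lemma integral_second_deriv_hat:
  fixes g g' g'' :: "real \<Rightarrow> real"
  assumes g: "\<And>x. (g has_real_derivative g' x) (at x)"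
    and g': "\<And>x. (g' has_real_derivative g'' x) (at x)"
    and g'': "\<And>x. isCont g'' x"
    and lam: "lam > 0"
  shows "(\<integral>t. (g'' t * max (1 - lam * t) 0) * indicator {0<..} t \<partial>lborel)
       = lam * g (1 / lam) - lam * g 0 - g' 0"
proof -
  have "g'' \<in> borel_measurable borel"
    by (rule borel_measurable_continuous_onI) (use g'' continuous_at_imp_continuous_on in blast)
  moreover have "AE t in lborel. (g'' t * max (1 - lam * t) 0) * indicator {0<..} t
      = (g'' t * (1 - lam * t)) * indicator {0..1/lam} t"
    using AE_lborel_singleton[of 0]
  proof eventually_elim
    case (elim t)
    have "t \<le> 1 / lam \<longleftrightarrow> 0 \<le> 1 - lam * t"
      using lam by (auto simp: field_simps)
    then show ?case
      using elim by (auto simp: indicator_def max_def)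
  qed
  ultimately have "(\<integral>t. (g'' t * max (1 - lam * t) 0) * indicator {0<..} t \<partial>lborel)
      = (\<integral>t. (g'' t * (1 - lam * t)) * indicator {0..1/lam} t \<partial>lborel)"
    by (intro integral_cong_AE) auto
  also have "\<dots> = (g' (1/lam) * (1 - lam * (1/lam)) + lam * g (1/lam)) - (g' 0 * (1 - lam * 0) + lam * g 0)"
    by (rule integral_FTC_Icc_real[where F = "\<lambda>t. g' t * (1 - lam * t) + lam * g t"])
       (use lam in \<open>auto intro!: derivative_eq_intros g g' continuous_intros g''
         DERIV_isCont[OF g'] simp: algebra_simps\<close>)
  finally show ?thesis
    using lam by simp
qed

section \<open>Test functions\<close>

context
  fixes w :: "real \<Rightarrow> real"
  assumes w: "test_function w"
begin

lemma test_function_differentiable: "((deriv ^^ n) w) differentiable (at x)"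
  using w unfolding test_function_def by blast

lemma test_function_DERIV: "(w has_real_derivative deriv w x) (at x)"
  using test_function_differentiable[of 0] by (simp add: DERIV_deriv_iff_real_differentiable)

lemma test_function_DERIV_deriv: "(deriv w has_real_derivative deriv (deriv w) x) (at x)"
  using test_function_differentiable[of 1] by (simp add: DERIV_deriv_iff_real_differentiable)

lemma test_function_isCont: "isCont w x"
  using DERIV_isCont test_function_DERIV by blast

lemma test_function_isCont_deriv: "isCont (deriv w) x"
  using DERIV_isCont test_function_DERIV_deriv by blast

lemma test_function_isCont_deriv2: "isCont (deriv (deriv w)) x"
  using test_function_differentiable[of 2]
  by (simp add: differentiable_imp_continuous_within numeral_2_eq_2)

lemma test_function_borel_measurable_deriv: "deriv w \<in> borel_measurable lborel"
proof -
  have "continuous_on UNIV (deriv w)"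
    using test_function_isCont_deriv by (intro continuous_at_imp_continuous_on) blast
  then show ?thesis
    using borel_measurable_continuous_onI by simp
qed

lemma test_function_support:
  obtains a b where "0 < a" "a \<le> b"
    "\<And>t. t < a \<or> b < t \<Longrightarrow> w t = 0 \<and> deriv w t = 0 \<and> deriv (deriv w) t = 0"
proof -
  obtain a b where ab: "0 < a" "a \<le> b" "\<And>t. t \<notin> {a..b} \<Longrightarrow> w t = 0"
    using w unfolding test_function_def by blast
  define S where "S = {..<a} \<union> {b<..}"
  have S: "open S" "\<And>t. t < a \<or> b < t \<Longrightarrow> t \<in> S"
    unfolding S_def by auto
  have w0: "y \<in> S \<Longrightarrow> w y = 0" for y
    using ab unfolding S_def by auto
  have w1: "y \<in> S \<Longrightarrow> deriv w y = 0" for y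
    using has_real_derivative_locally_zero[OF S(1), of _ w] w0 DERIV_imp_deriv by blast
  have w2: "y \<in> S \<Longrightarrow> deriv (deriv w) y = 0" for y
    using has_real_derivative_locally_zero[OF S(1), of _ "deriv w"] w1 DERIV_imp_deriv by blast
  show ?thesis
  proof (rule that[OF ab(1,2)])
    show "w t = 0 \<and> deriv w t = 0 \<and> deriv (deriv w) t = 0" if "t < a \<or> b < t" for t
      using w0 w1 w2 S(2)[OF that] by simp
  qed
qed

lemma test_function_vanishes_nonpos:
  assumes "t \<le> 0"
  shows "w t = 0" "deriv w t = 0" "deriv (deriv w) t = 0"
proof -
  obtain a b where "0 < a" "a \<le> b" "\<And>t. t < a \<or> b < t \<Longrightarrow> w t = 0 \<and> deriv w t = 0 \<and> deriv (deriv w) t = 0"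
    using test_function_support by blast
  then show "w t = 0" "deriv w t = 0" "deriv (deriv w) t = 0"
    using assms by auto
qed

lemma test_function_vanishes_beyond:
  obtains b where "\<And>t. b \<le> t \<Longrightarrow> w t = 0 \<and> deriv w t = 0 \<and> deriv (deriv w) t = 0"
proof -
  obtain a b where "0 < a" "a \<le> b" "\<And>t. t < a \<or> b < t \<Longrightarrow> w t = 0 \<and> deriv w t = 0 \<and> deriv (deriv w) t = 0"
    using test_function_support by blast
  then show ?thesis
    using that[of "b + 1"] by auto
qed

lemma test_function_inverse_vanishes_near_zero:
  obtains e where "e > 0"
    "\<And>y. y < e \<Longrightarrow> w (1/y) = 0 \<and> deriv w (1/y) = 0 \<and> deriv (deriv w) (1/y) = 0"
proof -
  obtain a b where ab: "0 < a" "a \<le> b"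
    and z: "\<And>t. t < a \<or> b < t \<Longrightarrow> w t = 0 \<and> deriv w t = 0 \<and> deriv (deriv w) t = 0"
    using test_function_support by blast
  show ?thesis
  proof (rule that[of "1/b"])
    show "1/b > 0"
      using ab by simp
    fix y :: real
    assume y: "y < 1/b"
    have "1/y < a \<or> b < 1/y"
    proof (cases "y \<le> 0")
      case True
      then show ?thesis
      proof -
        have "1/y \<le> 0"
          using True by (simp add: divide_nonpos_pos)
        then show ?thesis
          using ab by linarith
      qed
    next
      case False
      then show ?thesis
        using ab y by (auto simp: field_simps)
    qed
    then show "w (1/y) = 0 \<and> deriv w (1/y) = 0 \<and> deriv (deriv w) (1/y) = 0"
      using z by blast
  qed
qed

lemma DERIV_times_test_function_inverse:
  "((\<lambda>r. r * w (1/r)) has_real_derivative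
     (if x \<le> 0 then 0 else w (1/x) - deriv w (1/x) / x)) (at x)"
proof (cases "x \<le> 0")
  case True
  obtain e where "e > 0" and e: "\<And>y. y < e \<Longrightarrow> w (1/y) = 0 \<and> deriv w (1/y) = 0 \<and> deriv (deriv w) (1/y) = 0"
    using test_function_inverse_vanishes_near_zero by blast
  have "((\<lambda>r. r * w (1/r)) has_real_derivative 0) (at x)"
    by (rule has_real_derivative_locally_zero[of "{..<e}"]) (use True \<open>e > 0\<close> e in auto)
  then show ?thesis
    using True by simp
next
  case False
  have "((\<lambda>r. r * w (1/r)) has_real_derivative
      1 * w (1/x) + x * (deriv w (1/x) * - inverse (x^2))) (at x)"
    using False by (auto intro!: derivative_eq_intros DERIV_chain2[OF test_function_DERIV]
        simp: divide_inverse power2_eq_square)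
  moreover have "1 * w (1/x) + x * (deriv w (1/x) * - inverse (x^2)) = w (1/x) - deriv w (1/x) / x"
    using False by (simp add: field_simps power2_eq_square)
  ultimately show ?thesis
    using False by simp
qed

lemma DERIV_deriv_times_test_function_inverse:
  "((\<lambda>t. if t \<le> 0 then 0 else w (1/t) - deriv w (1/t) / t) has_real_derivative
     (if x \<le> 0 then 0 else deriv (deriv w) (1/x) / x^3)) (at x)"
proof (cases "x \<le> 0")
  case True
  obtain e where "e > 0" and e: "\<And>y. y < e \<Longrightarrow> w (1/y) = 0 \<and> deriv w (1/y) = 0 \<and> deriv (deriv w) (1/y) = 0"
    using test_function_inverse_vanishes_near_zero by blast
  have "((\<lambda>t. if t \<le> 0 then 0 else w (1/t) - deriv w (1/t) / t) has_real_derivative 0) (at x)"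
    by (rule has_real_derivative_locally_zero[of "{..<e}"]) (use True \<open>e > 0\<close> e in auto)
  then show ?thesis
    using True by simp
next
  case False
  have "((\<lambda>t. w (1/t) - deriv w (1/t) / t) has_real_derivative
      deriv w (1/x) * - inverse (x^2)
      - ((deriv (deriv w) (1/x) * - inverse (x^2)) * x - deriv w (1/x) * 1) / (x * x)) (at x)"
    using False by (auto intro!: derivative_eq_intros DERIV_chain2[OF test_function_DERIV]
        DERIV_chain2[OF test_function_DERIV_deriv] simp: divide_inverse power2_eq_square)
      (auto simp: field_simps)
  moreover have "deriv w (1/x) * - inverse (x^2)
      - ((deriv (deriv w) (1/x) * - inverse (x^2)) * x - deriv w (1/x) * 1) / (x * x)
      = deriv (deriv w) (1/x) / x^3"
    using False by (simp add: field_simps power2_eq_square power3_eq_cube)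
  ultimately have "((\<lambda>t. w (1/t) - deriv w (1/t) / t) has_real_derivative
      (if x \<le> 0 then 0 else deriv (deriv w) (1/x) / x^3)) (at x)"
    using False by simp
  then show ?thesis
    by (rule has_field_derivative_transform_within_open[where S = "{0<..}"]) (use False in auto)
qed

lemma isCont_deriv2_test_function_inverse:
  "isCont (\<lambda>t. if t \<le> 0 then 0 else deriv (deriv w) (1/t) / t^3) x"
proof (cases "x \<le> 0")
  case True
  obtain e where "e > 0" and e: "\<And>y. y < e \<Longrightarrow> w (1/y) = 0 \<and> deriv w (1/y) = 0 \<and> deriv (deriv w) (1/y) = 0"
    using test_function_inverse_vanishes_near_zero by blast
  show ?thesis
    by (rule isCont_transform_open[OF continuous_const, of "{..<e}"])
       (use True \<open>e > 0\<close> e in auto)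
next
  case False
  have "isCont (\<lambda>t. deriv (deriv w) (1/t) / t^3) x"
    using False by (auto intro!: continuous_intros isCont_o2[OF _ test_function_isCont_deriv2])
  then show ?thesis
    by (rule isCont_transform_open[where S = "{0<..}"]) (use False in auto)
qed

lemma deriv_square_times_deriv_quotient:
  "deriv (\<lambda>r. r^2 * deriv (\<lambda>x. w x / x) r) = (\<lambda>s. s * deriv (deriv w) s)"
proof -
  have "r^2 * deriv (\<lambda>x. w x / x) r = r * deriv w r - w r" for r
  proof (cases "r = 0")
    case True
    then show ?thesis
      using test_function_vanishes_nonpos by simp
  next
    case False
    have "((\<lambda>x. w x / x) has_real_derivative (deriv w r * r - w r * 1) / (r * r)) (at r)"
      using False by (intro DERIV_divide test_function_DERIV DERIV_ident) auto
    then show ?thesis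
      using False by (simp add: DERIV_imp_deriv field_simps power2_eq_square)
  qed
  moreover have "deriv (\<lambda>r. r * deriv w r - w r) x = x * deriv (deriv w) x" for x
    by (rule DERIV_imp_deriv)
       (auto intro!: derivative_eq_intros test_function_DERIV test_function_DERIV_deriv)
  ultimately show ?thesis
    by auto
qed

end

context
  fixes w :: "real \<Rightarrow> real" and lam :: real
  assumes w: "test_function w" and lam: "lam > 0"
begin

lemma integral_deriv_hat:
  "(\<integral>t. (deriv w t * max (1 - lam * t) 0) * indicator {0<..} t \<partial>lborel)
     = (\<integral>t. (w t * (if t \<le> 1 / lam then lam else 0)) * indicator {0<..} t \<partial>lborel)"
proof -
  note w0 = test_function_vanishes_nonpos[OF w order.refl]
  have hat: "max (1 - lam * t) 0 = (if t \<le> 1 / lam then 1 - lam * t else 0)" for t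
    using lam by (auto simp: field_simps max_def)
  have split: "(\<lambda>t. (deriv w t * max (1 - lam * t) 0) * indicator {0<..} t)
      = (\<lambda>t. (lam * w t + (deriv w t * (1 - lam * t) - lam * w t)) * indicator {0..1/lam} t)"
  proof
    fix t
    show "(deriv w t * max (1 - lam * t) 0) * indicator {0<..} t
      = (lam * w t + (deriv w t * (1 - lam * t) - lam * w t)) * indicator {0..1/lam} t"
      using w0 by (cases "t = 0") (auto simp: indicator_def hat)
  qed
  have restrict: "(\<lambda>t. (w t * (if t \<le> 1 / lam then lam else 0)) * indicator {0<..} t)
      = (\<lambda>t. (lam * w t) * indicator {0..1/lam} t)"
  proof
    fix t
    show "(w t * (if t \<le> 1 / lam then lam else 0)) * indicator {0<..} t
      = (lam * w t) * indicator {0..1/lam} t"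
      using w0 by (cases "t = 0") (auto simp: indicator_def)
  qed
  have by_parts: "(\<integral>t. (deriv w t * (1 - lam * t) - lam * w t) * indicator {0..1/lam} t \<partial>lborel)
      = w (1/lam) * (1 - lam * (1/lam)) - w 0 * (1 - lam * 0)"
    by (rule integral_FTC_Icc_real[where F = "\<lambda>t. w t * (1 - lam * t)"])
       (use lam in \<open>auto intro!: derivative_eq_intros test_function_DERIV[OF w] continuous_intros
          test_function_isCont[OF w] test_function_isCont_deriv[OF w] simp: algebra_simps\<close>)
  have "integrable lborel (\<lambda>t. (lam * w t) * indicator {0..1/lam} t)"
    "integrable lborel (\<lambda>t. (deriv w t * (1 - lam * t) - lam * w t) * indicator {0..1/lam} t)"
    by (intro integrable_continuous_indicator_Icc continuous_intros
        test_function_isCont[OF w] test_function_isCont_deriv[OF w])+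
  from Bochner_Integration.integral_add[OF this] show ?thesis
    unfolding split restrict distrib_right by (simp add: by_parts w0 lam)
qed

lemma integral_hat_times_second_deriv_weighted:
  "(\<integral>t. (deriv (deriv (\<lambda>r. r * w r)) t * max (1 - lam * t) 0) * indicator {0<..} t \<partial>lborel)
     = w (1 / lam)"
proof -
  have g: "((\<lambda>r. r * w r) has_real_derivative w x + x * deriv w x) (at x)" for x
    by (auto intro!: derivative_eq_intros test_function_DERIV[OF w])
  have g': "((\<lambda>r. w r + r * deriv w r) has_real_derivative 2 * deriv w x + x * deriv (deriv w) x) (at x)" for x
    by (auto intro!: derivative_eq_intros test_function_DERIV[OF w] test_function_DERIV_deriv[OF w])
  have g'': "isCont (\<lambda>x. 2 * deriv w x + x * deriv (deriv w) x) x" for x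
    by (intro continuous_intros test_function_isCont_deriv[OF w] test_function_isCont_deriv2[OF w])
  show ?thesis
    unfolding deriv_deriv_eqI[OF g g']
    using integral_second_deriv_hat[OF g g' g'' lam] lam test_function_vanishes_nonpos[OF w order.refl]
    by simp
qed

lemma integral_hat_times_second_deriv_inverted:
  "(\<integral>t. (deriv (deriv (\<lambda>r. r * w (1/r))) t * max (1 - lam * t) 0) * indicator {0<..} t \<partial>lborel)
     = w lam"
  unfolding deriv_deriv_eqI[OF DERIV_times_test_function_inverse[OF w]
      DERIV_deriv_times_test_function_inverse[OF w]]
  using integral_second_deriv_hat[OF DERIV_times_test_function_inverse[OF w]
      DERIV_deriv_times_test_function_inverse[OF w] isCont_deriv2_test_function_inverse[OF w] lam] lam
  by simp

lemma integral_ramp_times_second_deriv: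
  "(\<integral>s. (s * deriv (deriv w) s * max (1 - lam * (1/s)) 0) * indicator {0<..} s \<partial>lborel) = w lam"
proof -
  obtain b where b: "\<And>t. b \<le> t \<Longrightarrow> w t = 0 \<and> deriv w t = 0 \<and> deriv (deriv w) t = 0"
    using test_function_vanishes_beyond[OF w] by blast
  define B where "B = max b lam"
  have "(\<lambda>s. (s * deriv (deriv w) s * max (1 - lam * (1/s)) 0) * indicator {0<..} s)
      = (\<lambda>s. ((s - lam) * deriv (deriv w) s) * indicator {lam..B} s)"
  proof
    fix s :: real
    consider "s < lam" | "lam \<le> s" "s \<le> B" | "B < s"
      by linarith
    then show "(s * deriv (deriv w) s * max (1 - lam * (1/s)) 0) * indicator {0<..} s
      = ((s - lam) * deriv (deriv w) s) * indicator {lam..B} s"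
    proof cases
      case 1
      show ?thesis
      proof (cases "s \<le> 0")
        case False
        then have "max (1 - lam * (1/s)) 0 = 0"
          using 1 by (simp add: field_simps max_def)
        then show ?thesis
          using 1 by (simp add: indicator_def)
      qed (use 1 in \<open>simp add: indicator_def\<close>)
    next
      case 2
      then have "max (1 - lam * (1/s)) 0 = 1 - lam / s"
        using lam by (auto simp: field_simps max_def)
      then show ?thesis
        using 2 lam by (auto simp: indicator_def field_simps)
    next
      case 3
      then show ?thesis
        using b[of s] by (simp add: B_def indicator_def)
    qed
  qed
  moreover have "(\<integral>s. ((s - lam) * deriv (deriv w) s) * indicator {lam..B} s \<partial>lborel)
      = ((B - lam) * deriv w B - w B) - ((lam - lam) * deriv w lam - w lam)"
    by (rule integral_FTC_Icc_real[where F = "\<lambda>s. (s - lam) * deriv w s - w s"])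
       (auto intro!: derivative_eq_intros test_function_DERIV[OF w] test_function_DERIV_deriv[OF w]
         continuous_intros test_function_isCont_deriv2[OF w] simp: B_def algebra_simps)
  ultimately show ?thesis
    using b[of B] by (simp add: B_def)
qed

lemma integral_deriv_indicator_inverse_ge:
  "(\<integral>t. (deriv w t * (if lam \<le> 1/t then 1 else 0)) * indicator {0<..} t \<partial>lborel) = w (1 / lam)"
proof -
  note w0 = test_function_vanishes_nonpos[OF w order.refl]
  have "(\<lambda>t. (deriv w t * (if lam \<le> 1/t then 1 else 0)) * indicator {0<..} t)
      = (\<lambda>t. deriv w t * indicator {0..1/lam} t)"
  proof
    fix t :: real
    consider "t \<le> 0" | "t > 0"
      by linarith
    then show "(deriv w t * (if lam \<le> 1/t then 1 else 0)) * indicator {0<..} t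
      = deriv w t * indicator {0..1/lam} t"
    proof cases
      case 2
      then have "lam \<le> 1/t \<longleftrightarrow> t \<le> 1/lam"
        using lam by (auto simp: field_simps)
      then show ?thesis
        using 2 by (auto simp: indicator_def)
    qed (use w0 in \<open>auto simp: indicator_def\<close>)
  qed
  moreover have "(\<integral>t. deriv w t * indicator {0..1/lam} t \<partial>lborel) = w (1/lam) - w 0"
    by (rule integral_FTC_Icc_real)
       (use lam in \<open>auto intro!: test_function_DERIV[OF w] test_function_isCont_deriv[OF w]\<close>)
  ultimately show ?thesis
    using w0 by simp
qed

lemma integral_deriv_indicator_ge:
  "(\<integral>s. (deriv w s * (if lam \<le> s then 1 else 0)) * indicator {0<..} s \<partial>lborel) = - w lam"
proof -
  obtain b where b: "\<And>t. b \<le> t \<Longrightarrow> w t = 0 \<and> deriv w t = 0 \<and> deriv (deriv w) t = 0"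
    using test_function_vanishes_beyond[OF w] by blast
  define B where "B = max b lam"
  have "(\<lambda>s. (deriv w s * (if lam \<le> s then 1 else 0)) * indicator {0<..} s)
      = (\<lambda>s. deriv w s * indicator {lam..B} s)"
    using lam b by (force simp: indicator_def B_def)
  moreover have "(\<integral>s. deriv w s * indicator {lam..B} s \<partial>lborel) = w B - w lam"
    by (rule integral_FTC_Icc_real)
       (auto intro!: test_function_DERIV[OF w] test_function_isCont_deriv[OF w] simp: B_def)
  ultimately show ?thesis
    using b[of B] by (simp add: B_def)
qed

lemma integral_linear_weight_deriv:
  "(\<integral>t. ((lam - t) * deriv w t) * indicator {0..lam} t \<partial>lborel)
     = (\<integral>t. w t * indicator {0..lam} t \<partial>lborel)"
proof -
  note w0 = test_function_vanishes_nonpos[OF w order.refl]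
  note cont = test_function_isCont[OF w] test_function_isCont_deriv[OF w]
  have i: "integrable lborel (\<lambda>t. ((lam - t) * deriv w t - w t) * indicator {0..lam} t)"
    "integrable lborel (\<lambda>t. w t * indicator {0..lam} t)"
    by (intro integrable_continuous_indicator_Icc continuous_intros cont)+
  have by_parts: "(\<integral>t. ((lam - t) * deriv w t - w t) * indicator {0..lam} t \<partial>lborel)
       = (lam - lam) * w lam - (lam - 0) * w 0"
    by (rule integral_FTC_Icc_real[where F = "\<lambda>t. (lam - t) * w t"])
       (use lam in \<open>auto intro!: derivative_eq_intros test_function_DERIV[OF w] continuous_intros cont
         simp: algebra_simps\<close>)
  have "(\<integral>t. ((lam - t) * deriv w t) * indicator {0..lam} t \<partial>lborel)
      = (\<integral>t. ((lam - t) * deriv w t - w t) * indicator {0..lam} t + w t * indicator {0..lam} t \<partial>lborel)"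
    by (rule arg_cong[where f = "integral\<^sup>L lborel"]) (auto simp: algebra_simps)
  also have "\<dots> = (\<integral>t. w t * indicator {0..lam} t \<partial>lborel)"
    using Bochner_Integration.integral_add[OF i] by (simp add: by_parts w0)
  finally show ?thesis .
qed

lemma integral_deriv_min:
  "(\<integral>t. (deriv w t * min t lam) * indicator {0<..} t \<partial>lborel)
     = - (\<integral>t. (w t * (1 - (if lam < t then 1 else 0))) * indicator {0<..} t \<partial>lborel)"
proof -
  note w0 = test_function_vanishes_nonpos[OF w order.refl]
  note cont = test_function_isCont[OF w] test_function_isCont_deriv[OF w]
  obtain b where b: "\<And>t. b \<le> t \<Longrightarrow> w t = 0 \<and> deriv w t = 0 \<and> deriv (deriv w) t = 0"
    using test_function_vanishes_beyond[OF w] by blast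
  define B where "B = max b lam"
  have split: "(\<lambda>t. (deriv w t * min t lam) * indicator {0<..} t)
      = (\<lambda>t. (lam * deriv w t) * indicator {0..B} t - ((lam - t) * deriv w t) * indicator {0..lam} t)"
  proof
    fix t
    consider "t \<le> 0" | "0 < t" "t \<le> lam" | "lam < t" "t \<le> B" | "B < t"
      by linarith
    then show "(deriv w t * min t lam) * indicator {0<..} t
      = (lam * deriv w t) * indicator {0..B} t - ((lam - t) * deriv w t) * indicator {0..lam} t"
    proof cases
      case 1
      then show ?thesis
        using w0 lam by (cases "t = 0") (auto simp: indicator_def B_def)
    next
      case 2
      then show ?thesis
        by (auto simp: indicator_def algebra_simps min_def B_def)
    qed (use lam b[of t] in \<open>auto simp: indicator_def min_def B_def\<close>)
  qed
  have restrict: "(\<lambda>t. (w t * (1 - (if lam < t then 1 else 0))) * indicator {0<..} t)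
      = (\<lambda>t. w t * indicator {0..lam} t)"
  proof
    fix t
    show "(w t * (1 - (if lam < t then 1 else 0))) * indicator {0<..} t = w t * indicator {0..lam} t"
      using w0 lam by (cases "t = 0") (auto simp: indicator_def)
  qed
  have i: "integrable lborel (\<lambda>t. (lam * deriv w t) * indicator {0..B} t)"
    "integrable lborel (\<lambda>t. ((lam - t) * deriv w t) * indicator {0..lam} t)"
    by (intro integrable_continuous_indicator_Icc continuous_intros cont)+
  have ftc_B: "(\<integral>t. (lam * deriv w t) * indicator {0..B} t \<partial>lborel) = lam * w B - lam * w 0"
    by (rule integral_FTC_Icc_real)
       (use lam in \<open>auto intro!: derivative_eq_intros test_function_DERIV[OF w] continuous_intros cont
         simp: B_def\<close>)
  show ?thesis
    unfolding split restrict Bochner_Integration.integral_diff[OF i] ftc_B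
      integral_linear_weight_deriv
    using w0 b[of B] by (simp add: B_def)
qed

end

section \<open>Measure-theoretic tools\<close>

lemma AE_lborel_inverse:
  fixes P :: "real \<Rightarrow> bool"
  assumes "AE s in lborel. s > 0 \<longrightarrow> P s"
  shows "AE t in lborel. t > 0 \<longrightarrow> P (1 / t)"
proof -
  obtain N where "{s \<in> space lborel. \<not> (s > 0 \<longrightarrow> P s)} \<subseteq> N"
    and "emeasure lborel N = 0" "N \<in> sets lborel"
    using assms by (rule AE_E)
  then have N: "{s \<in> space lborel. \<not> (s > 0 \<longrightarrow> P s)} \<subseteq> N" "N \<in> null_sets lborel"
    by (auto intro: null_setsI)
  have "negligible N"
    using null_sets_completionI[OF N(2)] by (simp add: negligible_iff_null_sets)
  then have "negligible (N \<inter> {0<..})"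
    by (rule negligible_subset) auto
  moreover have "(\<lambda>s::real. 1 / s) differentiable_on (N \<inter> {0<..})"
    by (auto intro!: derivative_intros simp: differentiable_on_def)
  ultimately have "negligible ((\<lambda>s::real. 1 / s) ` (N \<inter> {0<..}))"
    by (intro negligible_differentiable_image_negligible) auto
  then have null: "(\<lambda>s::real. 1 / s) ` (N \<inter> {0<..}) \<in> null_sets lebesgue"
    by (simp add: negligible_iff_null_sets)
  have "AE t in lebesgue. t > 0 \<longrightarrow> P (1 / t)"
  proof (rule AE_I'[OF null])
    show "{t \<in> space lebesgue. \<not> (t > 0 \<longrightarrow> P (1 / t))} \<subseteq> (\<lambda>s. 1 / s) ` (N \<inter> {0<..})"
    proof
      fix t
      assume "t \<in> {t \<in> space lebesgue. \<not> (t > 0 \<longrightarrow> P (1 / t))}"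
      then have "1 / t \<in> N" "1 / t > 0"
        using N(1) by auto
      then show "t \<in> (\<lambda>s. 1 / s) ` (N \<inter> {0<..})"
        by (intro image_eqI[of _ _ "1 / t"]) auto
    qed
  qed
  then show ?thesis
    by (simp add: AE_completion_iff)
qed

lemma borel_measurable_scaleR_vanishing_outside:
  fixes u :: "real \<Rightarrow> 'a::{banach,second_countable_topology}"
  assumes "g \<in> borel_measurable lborel" "\<And>t. t \<notin> S \<Longrightarrow> g t = 0"
    and "(\<lambda>t. indicator S t *\<^sub>R u t) \<in> borel_measurable lborel"
  shows "(\<lambda>t. g t *\<^sub>R u t) \<in> borel_measurable lborel"
proof -
  have eq: "(\<lambda>t. g t *\<^sub>R u t) = (\<lambda>t. g t *\<^sub>R (indicator S t *\<^sub>R u t))"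
  proof
    fix t
    show "g t *\<^sub>R u t = g t *\<^sub>R (indicator S t *\<^sub>R u t)"
      using assms(2)[of t] by (cases "t \<in> S") auto
  qed
  show ?thesis
    unfolding eq using assms(1,3) by measurable
qed

lemma IS_sol_measurable:
  assumes "IS_sol X J g v q" "0 < c"
  shows "(\<lambda>s. indicator {c..d} s *\<^sub>R v s) \<in> borel_measurable lborel"
proof -
  have "set_integrable lborel {c..d} (\<lambda>s. g - v s)"
    using assms unfolding IS_sol_def dist_deriv_def by blast
  then have "(\<lambda>s. indicator {c..d} s *\<^sub>R (g - v s)) \<in> borel_measurable lborel"
    unfolding set_integrable_def by (rule borel_measurable_integrable)
  moreover have "(\<lambda>s. indicator {c..d} s *\<^sub>R v s)
      = (\<lambda>s. indicator {c..d} s *\<^sub>R g - indicator {c..d} s *\<^sub>R (g - v s))"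
    by (auto simp: algebra_simps)
  ultimately show ?thesis
    by simp
qed

lemma indicator_Icc_inverse:
  fixes a b t :: real
  assumes "0 < a" "a \<le> b"
  shows "indicator {a..b} t = indicator {1/b..1/a} (1 / t)"
proof (cases "t > 0")
  case True
  then show ?thesis
    using assms by (auto simp: indicator_def field_simps)
next
  case False
  have "1 / t \<le> 0"
    using False by (simp add: divide_nonpos_pos)
  moreover have "1 / b > 0"
    using assms by simp
  ultimately have "\<not> 1 / b \<le> 1 / t"
    by linarith
  then have "1 / t \<notin> {1/b..1/a}"
    by (simp only: atLeastAtMost_iff) blast
  moreover have "t \<notin> {a..b}"
    using False assms by auto
  ultimately show ?thesis
    by simp
qed

lemma IS_sol_measurable_deriv_test_function:
  assumes sol: "IS_sol X J g v q" and w: "test_function w"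
  shows "(\<lambda>t. deriv w t *\<^sub>R v t) \<in> borel_measurable lborel"
    "(\<lambda>t. deriv w t *\<^sub>R v (1 / t)) \<in> borel_measurable lborel"
proof -
  obtain a b where ab: "0 < a" "a \<le> b"
    and vanish: "\<And>t. t < a \<or> b < t \<Longrightarrow> w t = 0 \<and> deriv w t = 0 \<and> deriv (deriv w) t = 0"
    using test_function_support[OF w] by blast
  have w'_vanish: "t \<notin> {a..b} \<Longrightarrow> deriv w t = 0" for t
    using vanish by auto
  have meas_v: "(\<lambda>s. indicator {a..b} s *\<^sub>R v s) \<in> borel_measurable lborel"
    "(\<lambda>s. indicator {1/b..1/a} s *\<^sub>R v s) \<in> borel_measurable lborel"
    using IS_sol_measurable[OF sol] ab by auto
  have meas_v_inverse: "(\<lambda>t. indicator {a..b} t *\<^sub>R v (1 / t)) \<in> borel_measurable lborel"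
    unfolding indicator_Icc_inverse[OF ab]
    using measurable_compose[OF _ meas_v(2), of "\<lambda>t. 1 / t"] by measurable
  note w'_meas = test_function_borel_measurable_deriv[OF w]
  show "(\<lambda>t. deriv w t *\<^sub>R v t) \<in> borel_measurable lborel"
    by (rule borel_measurable_scaleR_vanishing_outside[OF w'_meas _ meas_v(1)]) (rule w'_vanish)
  show "(\<lambda>t. deriv w t *\<^sub>R v (1 / t)) \<in> borel_measurable lborel"
    by (rule borel_measurable_scaleR_vanishing_outside[OF w'_meas _ meas_v_inverse]) (rule w'_vanish)
qed

section \<open>Eigenfunctions of one-homogeneous functionals\<close>

lemma shrinkage_energy_gap:
  fixes f v :: "'a::real_inner"
  assumes t: "t > 0" and lam: "lam > 0" and jv: "jv \<ge> lam * (f \<bullet> v)" "jv \<ge> 0"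
    and c: "c = max (1 - lam * t) 0"
  shows "norm (c *\<^sub>R f - f)^2 / 2 + t * (c * (lam * (f \<bullet> f))) + norm (v - c *\<^sub>R f)^2 / 2
       \<le> norm (v - f)^2 / 2 + t * jv"
proof -
  have expand: "norm (c *\<^sub>R f - f)^2 = (c - 1)^2 * (f \<bullet> f)"
    "norm (v - c *\<^sub>R f)^2 = v \<bullet> v - 2 * c * (f \<bullet> v) + c^2 * (f \<bullet> f)"
    "norm (v - f)^2 = v \<bullet> v - 2 * (f \<bullet> v) + f \<bullet> f"
    unfolding power2_norm_eq_inner
    by (simp_all add: inner_diff_left inner_diff_right power2_eq_square algebra_simps inner_commute)
  show ?thesis
  proof (cases "lam * t \<le> 1")
    case True
    then have cc: "c = 1 - lam * t"
      using c by simp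
    have "(c - 1)^2 * (f \<bullet> f) / 2 + t * (c * (lam * (f \<bullet> f)))
        + (v \<bullet> v - 2 * c * (f \<bullet> v) + c^2 * (f \<bullet> f)) / 2
        = (v \<bullet> v - 2 * (f \<bullet> v) + f \<bullet> f) / 2 + t * (lam * (f \<bullet> v))"
      unfolding cc by (simp add: power2_eq_square field_simps)
    also have "\<dots> \<le> (v \<bullet> v - 2 * (f \<bullet> v) + f \<bullet> f) / 2 + t * jv"
      using jv(1) t by (simp add: mult_left_mono)
    finally show ?thesis
      unfolding expand .
  next
    case False
    then have "c = 0"
      using c by simp
    have "f \<bullet> v \<le> t * jv"
    proof (cases "f \<bullet> v \<le> 0")
      case True
      then show ?thesis
        using t jv(2) by (smt (verit) mult_nonneg_nonneg)
    next
      case False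
      have "f \<bullet> v \<le> (lam * t) * (f \<bullet> v)"
        using False \<open>\<not> lam * t \<le> 1\<close> by (simp add: mult_le_cancel_right1)
      also have "\<dots> \<le> t * jv"
        using jv(1) t by (simp add: mult_left_mono mult.commute mult.left_commute)
      finally show ?thesis .
    qed
    then have "(c - 1)^2 * (f \<bullet> f) / 2 + t * (c * (lam * (f \<bullet> f)))
        + (v \<bullet> v - 2 * c * (f \<bullet> v) + c^2 * (f \<bullet> f)) / 2
        \<le> (v \<bullet> v - 2 * (f \<bullet> v) + f \<bullet> f) / 2 + t * jv"
      unfolding \<open>c = 0\<close> by (simp add: field_simps)
    then show ?thesis
      unfolding expand .
  qed
qed

locale homogeneous_eigenfunction =
  fixes X :: "'a::{real_inner,banach,second_countable_topology} set"
    and J :: "'a \<Rightarrow> ereal" and f :: 'a and lam :: real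
  assumes subspace_X: "subspace X"
    and J_nonneg: "\<And>u. u \<in> X \<Longrightarrow> J u \<ge> 0"
    and J_hom: "\<And>u c. u \<in> X \<Longrightarrow> J (c *\<^sub>R u) = ereal \<bar>c\<bar> * J u"
    and f_in_X: "f \<in> X"
    and lam_pos: "lam > 0"
    and eigen: "lam *\<^sub>R f \<in> subdiff X J f"
begin

lemma scaled_f_in_X: "c *\<^sub>R f \<in> X"
  using subspace_X f_in_X by (simp add: subspace_scale)

lemma J_eigenfunction: "J f = ereal (lam * (f \<bullet> f))"
proof -
  have J0: "J 0 = 0"
    using J_hom[OF f_in_X, of 0] by (simp add: zero_ereal_def[symmetric])
  have fin: "J f \<noteq> \<infinity>" and sub: "\<And>v. v \<in> X \<Longrightarrow> J f + ereal ((lam *\<^sub>R f) \<bullet> (v - f)) \<le> J v"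
    using eigen unfolding subdiff_def by auto
  obtain jf where jf: "J f = ereal jf"
    using fin J_nonneg[OF f_in_X] by (cases "J f") auto
  have "jf - lam * (f \<bullet> f) \<le> 0"
    using sub[OF scaled_f_in_X[of 0]] J0 jf by simp
  moreover have "jf + lam * (f \<bullet> f) \<le> 2 * jf"
    using sub[OF scaled_f_in_X[of 2]] J_hom[OF f_in_X, of 2] jf by (simp add: algebra_simps)
  ultimately show ?thesis
    using jf by simp
qed

lemma eigen_inner_le_J:
  assumes "v \<in> X"
  shows "ereal (lam * (f \<bullet> v)) \<le> J v"
proof -
  have "J f + ereal ((lam *\<^sub>R f) \<bullet> (v - f)) \<le> J v"
    using eigen assms unfolding subdiff_def by auto
  moreover have "J f + ereal ((lam *\<^sub>R f) \<bullet> (v - f)) = ereal (lam * (f \<bullet> v))"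
    by (simp add: J_eigenfunction inner_diff_right algebra_simps)
  ultimately show ?thesis
    by simp
qed

lemma J_scaled_eigenfunction:
  assumes "c \<ge> 0"
  shows "J (c *\<^sub>R f) = ereal (c * (lam * (f \<bullet> f)))"
  using J_hom[OF f_in_X, of c] assms by (simp add: J_eigenfunction)

lemma scaled_eigenfunction_in_subdiff:
  assumes "c \<ge> 0" "0 \<le> mu" "mu \<le> lam" "c = 0 \<or> mu = lam"
  shows "mu *\<^sub>R f \<in> subdiff X J (c *\<^sub>R f)"
  unfolding subdiff_def
proof (intro CollectI conjI ballI)
  show "c *\<^sub>R f \<in> X" "J (c *\<^sub>R f) \<noteq> \<infinity>"
    using scaled_f_in_X J_scaled_eigenfunction[OF assms(1)] by auto
  fix v
  assume v: "v \<in> X"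
  have "c * (lam * (f \<bullet> f)) + mu * (f \<bullet> v - c * (f \<bullet> f)) = mu * (f \<bullet> v)"
    using assms(4) by (auto simp: algebra_simps)
  then have "J (c *\<^sub>R f) + ereal ((mu *\<^sub>R f) \<bullet> (v - c *\<^sub>R f)) = ereal (mu * (f \<bullet> v))"
    using J_scaled_eigenfunction[OF assms(1)] by (simp add: inner_diff_right algebra_simps)
  also have "\<dots> \<le> J v"
  proof (cases "f \<bullet> v \<ge> 0")
    case True
    then have "mu * (f \<bullet> v) \<le> lam * (f \<bullet> v)"
      using assms(3) by (simp add: mult_right_mono)
    then show ?thesis
      using eigen_inner_le_J[OF v] by (meson ereal_less_eq(3) order_trans)
  next
    case False
    then have "ereal (mu * (f \<bullet> v)) \<le> 0"
      using assms(2) by (simp add: mult_nonneg_nonpos)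
    then show ?thesis
      using J_nonneg[OF v] by (meson order_trans)
  qed
  finally show "J (c *\<^sub>R f) + ereal ((mu *\<^sub>R f) \<bullet> (v - c *\<^sub>R f)) \<le> J v" .
qed

definition hat_flow :: "real \<Rightarrow> 'a" where
  "hat_flow t = max (1 - lam * t) 0 *\<^sub>R f"

lemma GF_sol_hat_flow: "GF_sol X J f hat_flow (\<lambda>t. (if t \<le> 1 / lam then lam else 0) *\<^sub>R f)"
  unfolding GF_sol_def
proof (intro conjI allI impI)
  show "continuous_on {0..} hat_flow" "hat_flow 0 = f"
    unfolding hat_flow_def by (auto intro!: continuous_intros)
  fix t :: real
  assume "t > 0"
  have "max (1 - lam * t) 0 = 0" if "\<not> t \<le> 1 / lam"
    using that lam_pos by (auto simp: field_simps max_def)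
  then show "(if t \<le> 1 / lam then lam else 0) *\<^sub>R f \<in> subdiff X J (hat_flow t)"
    unfolding hat_flow_def by (intro scaled_eigenfunction_in_subdiff) (use lam_pos in auto)
next
  show "dist_deriv hat_flow (\<lambda>t. - ((if t \<le> 1 / lam then lam else 0) *\<^sub>R f))"
    unfolding dist_deriv_def
  proof (intro conjI allI impI)
    fix a b :: real
    show "set_integrable lborel {a..b} hat_flow"
      unfolding set_integrable_def hat_flow_def
      by (rule borel_integrable_compact) (auto intro!: continuous_intros)
    show "set_integrable lborel {a..b} (\<lambda>t. - ((if t \<le> 1 / lam then lam else 0) *\<^sub>R f))"
      unfolding scaleR_minus_left[symmetric]
      by (rule set_integrable_bounded_scaleR_const[where K = lam]) (use lam_pos in auto)
  next
    fix w
    assume w: "test_function w"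
    have "- (LINT t:{0<..}|lborel. w t *\<^sub>R - ((if t \<le> 1 / lam then lam else 0) *\<^sub>R f))
        = (LINT t:{0<..}|lborel. w t *\<^sub>R ((if t \<le> 1 / lam then lam else 0) *\<^sub>R f))"
      unfolding set_lebesgue_integral_def by simp
    then show "(LINT t:{0<..}|lborel. deriv w t *\<^sub>R hat_flow t)
        = - (LINT t:{0<..}|lborel. w t *\<^sub>R - ((if t \<le> 1 / lam then lam else 0) *\<^sub>R f))"
      unfolding hat_flow_def set_integral_scaleR_scaleR_const integral_deriv_hat[OF w lam_pos]
      by simp
  qed
qed

lemma VM_minimizer_eq_hat_flow:
  assumes t: "t > 0" and u: "u \<in> X"
    and min: "\<forall>v\<in>X. ereal (norm (u - f)^2 / 2) + ereal t * J u
                 \<le> ereal (norm (v - f)^2 / 2) + ereal t * J v"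
  shows "u = hat_flow t"
proof -
  define c where "c = max (1 - lam * t) 0"
  define K where "K = norm (c *\<^sub>R f - f)^2 / 2 + t * (c * (lam * (f \<bullet> f)))"
  have upper: "ereal (norm (u - f)^2 / 2) + ereal t * J u \<le> ereal K"
    using min scaled_f_in_X[of c] J_scaled_eigenfunction[of c] unfolding K_def c_def by fastforce
  have lower: "ereal (K + norm (u - c *\<^sub>R f)^2 / 2) \<le> ereal (norm (u - f)^2 / 2) + ereal t * J u"
  proof (cases "J u")
    case (real ju)
    have "ju \<ge> lam * (f \<bullet> u)" "ju \<ge> 0"
      using eigen_inner_le_J[OF u] J_nonneg[OF u] real by auto
    then show ?thesis
      using shrinkage_energy_gap[OF t lam_pos _ _ c_def] real unfolding K_def by simp
  qed (use t J_nonneg[OF u] in auto)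
  have "norm (u - c *\<^sub>R f)^2 \<le> 0"
    using order_trans[OF lower upper] by simp
  then show ?thesis
    unfolding hat_flow_def c_def by simp
qed

lemma spectra_hat_flow:
  assumes u: "\<And>t. t > 0 \<Longrightarrow> u t = hat_flow t" and w: "test_function w"
  shows "phi_tt u w = w (1 / lam) *\<^sub>R f" "psi_GF u w = w lam *\<^sub>R f" "psi_VM u w = w lam *\<^sub>R f"
proof -
  have "phi_tt u w = phi_tt hat_flow w" "psi_GF u w = psi_GF hat_flow w" "psi_VM u w = psi_VM hat_flow w"
    unfolding phi_tt_def psi_GF_def psi_VM_def by (auto intro!: set_lebesgue_integral_cong simp: u)
  then show "phi_tt u w = w (1 / lam) *\<^sub>R f" "psi_GF u w = w lam *\<^sub>R f" "psi_VM u w = w lam *\<^sub>R f"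
    unfolding phi_tt_def psi_GF_def psi_VM_def hat_flow_def set_integral_scaleR_scaleR_const
      deriv_square_times_deriv_quotient[OF w] integral_hat_times_second_deriv_weighted[OF w lam_pos]
      integral_hat_times_second_deriv_inverted[OF w lam_pos] integral_ramp_times_second_deriv[OF w lam_pos]
    by simp_all
qed

lemma IS_sol_step: "IS_sol X J f (\<lambda>s. (if lam < s then 1 else 0) *\<^sub>R f) (\<lambda>s. min s lam *\<^sub>R f)"
  unfolding IS_sol_def
proof (intro conjI allI impI)
  show "(if lam < 0 then 1 else 0) *\<^sub>R f = 0" "min 0 lam *\<^sub>R f = 0"
    using lam_pos by auto
  show "continuous_on {0..} (\<lambda>s. min s lam *\<^sub>R f)"
    by (intro continuous_intros)
  fix s :: real
  assume "s > 0"
  then show "min s lam *\<^sub>R f \<in> subdiff X J ((if lam < s then 1 else 0) *\<^sub>R f)"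
    by (intro scaled_eigenfunction_in_subdiff) (use lam_pos in auto)
next
  have residual: "f - (if lam < s then 1 else 0) *\<^sub>R f = (1 - (if lam < s then 1 else 0)) *\<^sub>R f" for s
    by (simp add: algebra_simps)
  show "dist_deriv (\<lambda>s. min s lam *\<^sub>R f) (\<lambda>s. f - (if lam < s then 1 else 0) *\<^sub>R f)"
    unfolding dist_deriv_def residual
  proof (intro conjI allI impI)
    fix a b :: real
    show "set_integrable lborel {a..b} (\<lambda>s. min s lam *\<^sub>R f)"
      unfolding set_integrable_def by (rule borel_integrable_compact) (auto intro!: continuous_intros)
    show "set_integrable lborel {a..b} (\<lambda>s. (1 - (if lam < s then 1 else 0)) *\<^sub>R f)"
      by (rule set_integrable_bounded_scaleR_const[where K = 1]) auto
  next
    fix w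
    assume "test_function w"
    then show "(LINT t:{0<..}|lborel. deriv w t *\<^sub>R (min t lam *\<^sub>R f))
        = - (LINT t:{0<..}|lborel. w t *\<^sub>R ((1 - (if lam < t then 1 else 0)) *\<^sub>R f))"
      unfolding set_integral_scaleR_scaleR_const by (simp add: integral_deriv_min lam_pos)
  qed
qed

lemma spectra_IS_step:
  assumes sol: "IS_sol X J f v q"
    and ae: "AE s in lborel. s > 0 \<longrightarrow> v s = (if lam < s then 1 else 0) *\<^sub>R f"
    and w: "test_function w"
  shows "phi_IS v w = w (1 / lam) *\<^sub>R f" "psi_IS v w = w lam *\<^sub>R f"
proof -
  \<comment> \<open>changing the jump value on the null set at lam matches the closed intervals used below\<close>
  define V where "V s = (if lam \<le> s then 1 else 0) *\<^sub>R f" for s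
  have ae_V: "AE s in lborel. s > 0 \<longrightarrow> v s = V s"
    using ae AE_lborel_singleton[of lam] by eventually_elim (auto simp: V_def)
  have meas_V: "(\<lambda>t. deriv w t *\<^sub>R V t) \<in> borel_measurable lborel"
    "(\<lambda>t. deriv w t *\<^sub>R V (1 / t)) \<in> borel_measurable lborel"
    using test_function_borel_measurable_deriv[OF w] unfolding V_def by measurable
  have "phi_IS v w = (LINT t:{0<..}|lborel. deriv w t *\<^sub>R V (1 / t))"
    unfolding phi_IS_def
    by (rule set_lebesgue_integral_cong_AE[OF _ IS_sol_measurable_deriv_test_function(2)[OF sol w] meas_V(2)])
       (use AE_lborel_inverse[OF ae_V] in \<open>auto elim!: eventually_mono\<close>)
  then show "phi_IS v w = w (1 / lam) *\<^sub>R f"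
    unfolding V_def set_integral_scaleR_scaleR_const integral_deriv_indicator_inverse_ge[OF w lam_pos] .
  have "psi_IS v w = - (LINT t:{0<..}|lborel. deriv w t *\<^sub>R V t)"
    unfolding psi_IS_def
    by (subst set_lebesgue_integral_cong_AE[OF _ IS_sol_measurable_deriv_test_function(1)[OF sol w] meas_V(1)])
       (use ae_V in \<open>auto elim!: eventually_mono\<close>)
  then show "psi_IS v w = w lam *\<^sub>R f"
    unfolding V_def set_integral_scaleR_scaleR_const integral_deriv_indicator_ge[OF w lam_pos] by simp
qed

end

theorem mainTheorem1:
  fixes X :: "'a::{real_inner,banach,second_countable_topology} set"
    and nX :: "'a \<Rightarrow> real"
    and J :: "'a \<Rightarrow> ereal"
    and f :: 'a
    and lam :: real
  assumes X_banach: "banach_embedded X nX"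
    and J_nonneg: "\<forall>u\<in>X. J u \<ge> 0"
    and J_convex: "\<forall>u\<in>X. \<forall>v\<in>X. \<forall>\<theta>\<in>{0..1}.
                     J (\<theta> *\<^sub>R u + (1 - \<theta>) *\<^sub>R v) \<le> ereal \<theta> * J u + ereal (1 - \<theta>) * J v"
    and J_hom: "\<forall>u\<in>X. \<forall>c. J (c *\<^sub>R u) = ereal \<bar>c\<bar> * J u"
    and J_pos: "\<forall>u\<in>X. u \<noteq> 0 \<longrightarrow> J u > 0"
    and GF_wellposed: "\<forall>g\<in>X. \<forall>u1 p1 u2 p2. GF_sol X J g u1 p1 \<and> GF_sol X J g u2 p2 \<longrightarrow>
                          (\<forall>t\<ge>0. u1 t = u2 t)"
    and IS_wellposed: "\<forall>g\<in>X. \<forall>v1 q1 v2 q2. IS_sol X J g v1 q1 \<and> IS_sol X J g v2 q2 \<longrightarrow>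
                          (AE s in lborel. s > 0 \<longrightarrow> v1 s = v2 s)"
    and f_X: "f \<in> X"
    and lam_pos: "lam > 0"
    and eigen: "lam *\<^sub>R f \<in> subdiff X J f"
  shows "(\<forall>u p. GF_sol X J f u p \<longrightarrow>
            (\<forall>w. test_function w \<longrightarrow>
               phi_tt u w = w (1 / lam) *\<^sub>R f \<and> psi_GF u w = w lam *\<^sub>R f)) \<and>
         (\<forall>u. VM_sol X J f u \<longrightarrow>
            (\<forall>w. test_function w \<longrightarrow>
               phi_tt u w = w (1 / lam) *\<^sub>R f \<and> psi_VM u w = w lam *\<^sub>R f)) \<and>
         (\<forall>v q. IS_sol X J f v q \<longrightarrow>
            (\<forall>w. test_function w \<longrightarrow>
               phi_IS v w = w (1 / lam) *\<^sub>R f \<and> psi_IS v w = w lam *\<^sub>R f))"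
proof -
  interpret homogeneous_eigenfunction X J f lam
    using X_banach J_nonneg J_hom f_X lam_pos eigen
    by unfold_locales (auto simp: banach_embedded_def)
  show ?thesis
  proof (rule conjI[OF _ conjI]; intro allI impI)
    fix u p w
    assume "GF_sol X J f u p" and w: "test_function w"
    then have "u t = hat_flow t" if "t > 0" for t
      using GF_wellposed f_X GF_sol_hat_flow that by (meson less_imp_le)
    then show "phi_tt u w = w (1 / lam) *\<^sub>R f \<and> psi_GF u w = w lam *\<^sub>R f"
      using spectra_hat_flow[OF _ w] by blast
  next
    fix u w
    assume "VM_sol X J f u" and w: "test_function w"
    then have "u t = hat_flow t" if "t > 0" for t
      using VM_minimizer_eq_hat_flow that unfolding VM_sol_def by blast
    then show "phi_tt u w = w (1 / lam) *\<^sub>R f \<and> psi_VM u w = w lam *\<^sub>R f"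
      using spectra_hat_flow[OF _ w] by blast
  next
    fix v q w
    assume sol: "IS_sol X J f v q" and w: "test_function w"
    then have "AE s in lborel. s > 0 \<longrightarrow> v s = (if lam < s then 1 else 0) *\<^sub>R f"
      using IS_wellposed f_X IS_sol_step by blast
    then show "phi_IS v w = w (1 / lam) *\<^sub>R f \<and> psi_IS v w = w lam *\<^sub>R f"
      using spectra_IS_step[OF sol _ w] by blast
  qed
qed

end
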